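(* Let $S$ be a set and $n\le N$ positive integers. For every $\mu\in\mathscr N_n(S)$ there exist real numbers $c(\mu,\nu)$, $\nu\in\mathscr N_N(S)$, all but finitely many equal to zero, such that \[ u^n_{n,\mu}=\sum_{\nu\in\mathscr N_N(S)}c(\mu,\nu)\,u^N_{n,\nu}. \] Moreover (for these coefficients) there exists $K>0$, depending on $n$ and $N$, such that $\sup_{\mu\in\mathscr N_n(S)}\sum_{\nu\in\mathscr N_N(S)}|c(\mu,\nu)|<K$.
   Context: A point measure on $S$ is a measure on all subsets of $S$ of the form $\sum_{i=1}^d c_i\delta_{a_i}$ with $c_i$ nonnegative integers and $a_i\in S$; $\mathscr N_N(S)$ is the set of point measures of total mass $N$. For $x=(x_1,\ldots,x_N)\in S^N$ its type is $\epsilon_x=\sum_{i=1}^N\delta_{x_i}$, and for $\nu\in\mathscr N_N(S)$, $S^N(\nu)=\{x\in S^N:\epsilon_x=\nu\}$ (a finite set). $u_{N,\nu}$ is the uniform probability measure on $S^N(\nu)$, and $u^N_{n,\nu}$ is the image of $u_{N,\nu}$ under the projection $(x_1,\ldots,x_N)\mapsto(x_1,\ldots,x_n)$; these are finitely supported probability measures on $S^n$ (defined on all subsets). *)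

theory Defs
  imports "HOL-Probability.Probability" "HOL-Library.Multiset"
begin

text \<open>Point measures of total mass N on S, represented as multisets over S.\<close>
definition point_measures :: "'a set \<Rightarrow> nat \<Rightarrow> 'a multiset set" where
  "point_measures S N = {\<nu>. set_mset \<nu> \<subseteq> S \<and> size \<nu> = N}"

definition tuples_of_type :: "nat \<Rightarrow> 'a multiset \<Rightarrow> 'a list set" where
  "tuples_of_type N \<nu> = {x. length x = N \<and> mset x = \<nu>}"

definition proj_unif :: "nat \<Rightarrow> nat \<Rightarrow> 'a multiset \<Rightarrow> 'a list pmf" where
  "proj_unif N n \<nu> = map_pmf (take n) (pmf_of_set (tuples_of_type N \<nu>))"

end

theory Submission
  imports Defs "HOL-Combinatorics.Multiset_Permutations"
begin

text \<open>Write \<open>u(M, n, \<nu>)\<close> for the law of the first \<open>n\<close> coordinates of a uniform tuple of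
  type \<open>\<nu>\<close>, \<open>|\<nu>| = M\<close>. Deleting the last coordinate gives the mixture
  \<open>u(m + 1, m, \<nu>) = \<Sum>\<^sub>b \<nu>(b)/(m + 1) \<cdot> u(m, m, \<nu> - \<delta>\<^sub>b)\<close>. For \<open>\<nu> = \<mu> + \<delta>\<^sub>a\<close> this can be solved for
  \<open>u(m, m, \<mu>)\<close> in terms of \<open>u(m + 1, m, \<mu> + \<delta>\<^sub>a)\<close> and the \<open>u(m, m, \<mu> + \<delta>\<^sub>a - \<delta>\<^sub>b)\<close>, \<open>b \<noteq> a\<close>,
  whose types contain \<open>a\<close> once more. Iterating until the type is concentrated on \<open>a\<close>
  writes \<open>u(m, m, \<mu>)\<close> as a combination of the \<open>u(m + 1, m, \<nu>)\<close> with coefficients of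
  \<open>\<ell>\<^sup>1\<close>-norm at most \<open>(2m + 2)\<^bsup>m+1\<^esup>\<close>. Projecting to the first \<open>n\<close> coordinates and
  composing these lifts from level \<open>n\<close> up to level \<open>N\<close> gives the representation, with
  a bound depending only on \<open>n\<close> and \<open>N\<close>.\<close>

definition bounded_combinations ::
    "'i set \<Rightarrow> ('i \<Rightarrow> 'x \<Rightarrow> real) \<Rightarrow> real \<Rightarrow> ('x \<Rightarrow> real) set" where
  "bounded_combinations P g B = {f. \<exists>F d. finite F \<and> F \<subseteq> P \<and>
      (\<forall>x. f x = (\<Sum>\<nu>\<in>F. d \<nu> * g \<nu> x)) \<and> (\<Sum>\<nu>\<in>F. \<bar>d \<nu>\<bar>) \<le> B}"

lemma bounded_combinationsI:
  assumes "finite F" "F \<subseteq> P" "\<And>x. f x = (\<Sum>\<nu>\<in>F. d \<nu> * g \<nu> x)" "(\<Sum>\<nu>\<in>F. \<bar>d \<nu>\<bar>) \<le> B"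
  shows "f \<in> bounded_combinations P g B"
  using assms unfolding bounded_combinations_def by blast

lemma bounded_combinations_mono:
  "B \<le> B' \<Longrightarrow> bounded_combinations P g B \<subseteq> bounded_combinations P g B'"
  unfolding bounded_combinations_def by (auto intro: order_trans)

lemma bounded_combinations_basis:
  "\<nu> \<in> P \<Longrightarrow> g \<nu> \<in> bounded_combinations P g 1"
  by (rule bounded_combinationsI[where F="{\<nu>}" and d="\<lambda>_. 1"]) auto

lemma bounded_combinations_zero: "(\<lambda>_. 0) \<in> bounded_combinations P g 0"
  by (rule bounded_combinationsI[of "{}"]) auto

lemma bounded_combinations_scale:
  assumes "f \<in> bounded_combinations P g B"
  shows "(\<lambda>x. w * f x) \<in> bounded_combinations P g (\<bar>w\<bar> * B)"
proof -
  obtain F d where F: "finite F" "F \<subseteq> P" "\<And>x. f x = (\<Sum>\<nu>\<in>F. d \<nu> * g \<nu> x)"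
    and bound: "(\<Sum>\<nu>\<in>F. \<bar>d \<nu>\<bar>) \<le> B"
    using assms unfolding bounded_combinations_def by blast
  show ?thesis
  proof (rule bounded_combinationsI[OF F(1,2)])
    show "w * f x = (\<Sum>\<nu>\<in>F. (w * d \<nu>) * g \<nu> x)" for x
      by (simp add: F(3) sum_distrib_left mult.assoc)
    show "(\<Sum>\<nu>\<in>F. \<bar>w * d \<nu>\<bar>) \<le> \<bar>w\<bar> * B"
      using bound by (simp add: abs_mult sum_distrib_left[symmetric] mult_left_mono)
  qed
qed

lemma bounded_combinations_add:
  assumes "f \<in> bounded_combinations P g B" and "h \<in> bounded_combinations P g C"
  shows "(\<lambda>x. f x + h x) \<in> bounded_combinations P g (B + C)"
proof -
  obtain F d where F: "finite F" "F \<subseteq> P" "\<And>x. f x = (\<Sum>\<nu>\<in>F. d \<nu> * g \<nu> x)"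
    and bound_F: "(\<Sum>\<nu>\<in>F. \<bar>d \<nu>\<bar>) \<le> B"
    using assms(1) unfolding bounded_combinations_def by blast
  obtain H e where H: "finite H" "H \<subseteq> P" "\<And>x. h x = (\<Sum>\<nu>\<in>H. e \<nu> * g \<nu> x)"
    and bound_H: "(\<Sum>\<nu>\<in>H. \<bar>e \<nu>\<bar>) \<le> C"
    using assms(2) unfolding bounded_combinations_def by blast
  define d' where "d' \<nu> = (if \<nu> \<in> F then d \<nu> else 0)" for \<nu>
  define e' where "e' \<nu> = (if \<nu> \<in> H then e \<nu> else 0)" for \<nu>
  have fin: "finite (F \<union> H)" using F H by simp
  have extend: "(\<Sum>\<nu>\<in>F \<union> H. (if \<nu> \<in> X then k \<nu> else 0)) = (\<Sum>\<nu>\<in>X. k \<nu>)"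
    if "X \<subseteq> F \<union> H" for X and k :: "_ \<Rightarrow> real"
    using sum.inter_restrict[OF fin, of k X] that by (simp add: Int_absorb1)
  show ?thesis
  proof (rule bounded_combinationsI[where F="F \<union> H" and d="\<lambda>\<nu>. d' \<nu> + e' \<nu>"])
    show "finite (F \<union> H)" "F \<union> H \<subseteq> P" using F H by auto
    show "f x + h x = (\<Sum>\<nu>\<in>F \<union> H. (d' \<nu> + e' \<nu>) * g \<nu> x)" for x
      using extend[of F "\<lambda>\<nu>. d \<nu> * g \<nu> x"] extend[of H "\<lambda>\<nu>. e \<nu> * g \<nu> x"]
      by (simp add: F(3) H(3) distrib_right sum.distrib d'_def e'_def if_distrib[of "\<lambda>a. a * _"] cong: if_cong)
    have "(\<Sum>\<nu>\<in>F \<union> H. \<bar>d' \<nu> + e' \<nu>\<bar>) \<le> (\<Sum>\<nu>\<in>F \<union> H. \<bar>d' \<nu>\<bar> + \<bar>e' \<nu>\<bar>)"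
      by (rule sum_mono) (rule abs_triangle_ineq)
    also have "\<dots> = (\<Sum>\<nu>\<in>F. \<bar>d \<nu>\<bar>) + (\<Sum>\<nu>\<in>H. \<bar>e \<nu>\<bar>)"
      using extend[of F "\<lambda>\<nu>. \<bar>d \<nu>\<bar>"] extend[of H "\<lambda>\<nu>. \<bar>e \<nu>\<bar>"]
      by (simp add: sum.distrib d'_def e'_def if_distrib[of abs] cong: if_cong)
    finally show "(\<Sum>\<nu>\<in>F \<union> H. \<bar>d' \<nu> + e' \<nu>\<bar>) \<le> B + C"
      using bound_F bound_H by linarith
  qed
qed

lemma bounded_combinations_sum:
  assumes "finite I" and "\<And>i. i \<in> I \<Longrightarrow> f i \<in> bounded_combinations P g (B i)"
  shows "(\<lambda>x. \<Sum>i\<in>I. f i x) \<in> bounded_combinations P g (\<Sum>i\<in>I. B i)"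
  using assms
proof (induction I rule: finite_induct)
  case empty
  show ?case using bounded_combinations_zero by simp
next
  case (insert i I)
  then show ?case
    using bounded_combinations_add[of "f i" P g "B i" "\<lambda>x. \<Sum>i\<in>I. f i x"] by simp
qed

lemma bounded_combinations_compose:
  assumes "f \<in> bounded_combinations P g B"
    and "\<And>\<nu>. \<nu> \<in> P \<Longrightarrow> g \<nu> \<in> bounded_combinations Q h C" and "C \<ge> 0"
  shows "f \<in> bounded_combinations Q h (B * C)"
proof -
  obtain F d where F: "finite F" "F \<subseteq> P" "\<And>x. f x = (\<Sum>\<nu>\<in>F. d \<nu> * g \<nu> x)"
    and bound: "(\<Sum>\<nu>\<in>F. \<bar>d \<nu>\<bar>) \<le> B"
    using assms(1) unfolding bounded_combinations_def by blast
  have "(\<lambda>x. \<Sum>\<nu>\<in>F. d \<nu> * g \<nu> x) \<in> bounded_combinations Q h (\<Sum>\<nu>\<in>F. \<bar>d \<nu>\<bar> * C)"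
    using F(1,2) by (intro bounded_combinations_sum bounded_combinations_scale assms(2)) auto
  moreover have "(\<Sum>\<nu>\<in>F. \<bar>d \<nu>\<bar> * C) \<le> B * C"
    using bound assms(3) by (simp add: sum_distrib_right[symmetric] mult_right_mono)
  ultimately have "(\<lambda>x. \<Sum>\<nu>\<in>F. d \<nu> * g \<nu> x) \<in> bounded_combinations Q h (B * C)"
    using bounded_combinations_mono by blast
  moreover have "f = (\<lambda>x. \<Sum>\<nu>\<in>F. d \<nu> * g \<nu> x)" using F(3) by blast
  ultimately show ?thesis by simp
qed

lemma bounded_combinations_vimage:
  "f \<in> bounded_combinations P g B \<Longrightarrow>
     (\<lambda>x. f (h x)) \<in> bounded_combinations P (\<lambda>\<nu> x. g \<nu> (h x)) B"
  unfolding bounded_combinations_def by blast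

lemma bounded_combinations_coefficients:
  assumes "f \<in> bounded_combinations P g B"
  shows "\<exists>c. finite {\<nu>\<in>P. c \<nu> \<noteq> 0} \<and>
    (\<forall>x. f x = (\<Sum>\<nu>\<in>{\<nu>\<in>P. c \<nu> \<noteq> 0}. c \<nu> * g \<nu> x)) \<and> (\<Sum>\<nu>\<in>{\<nu>\<in>P. c \<nu> \<noteq> 0}. \<bar>c \<nu>\<bar>) \<le> B"
proof -
  obtain F d where F: "finite F" "F \<subseteq> P" "\<And>x. f x = (\<Sum>\<nu>\<in>F. d \<nu> * g \<nu> x)"
    and bound: "(\<Sum>\<nu>\<in>F. \<bar>d \<nu>\<bar>) \<le> B"
    using assms unfolding bounded_combinations_def by blast
  define c where "c \<nu> = (if \<nu> \<in> F then d \<nu> else 0)" for \<nu>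
  have supp: "{\<nu>\<in>P. c \<nu> \<noteq> 0} \<subseteq> F" by (auto simp: c_def)
  have restrict: "(\<Sum>\<nu>\<in>{\<nu>\<in>P. c \<nu> \<noteq> 0}. k (c \<nu>) \<nu>) = (\<Sum>\<nu>\<in>F. k (d \<nu>) \<nu>)"
    if "\<And>\<nu>. k 0 \<nu> = (0::real)" for k
  proof -
    have "(\<Sum>\<nu>\<in>{\<nu>\<in>P. c \<nu> \<noteq> 0}. k (c \<nu>) \<nu>) = (\<Sum>\<nu>\<in>F. k (c \<nu>) \<nu>)"
      using F(1,2) supp that by (intro sum.mono_neutral_left) auto
    then show ?thesis by (simp add: c_def)
  qed
  show ?thesis
    using F(1,3) bound supp restrict[of "\<lambda>a \<nu>. a * g \<nu> _"] restrict[of "\<lambda>a _. \<bar>a\<bar>"]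
    by (intro exI[of _ c]) (auto intro: finite_subset)
qed

abbreviation proj_prob :: "nat \<Rightarrow> nat \<Rightarrow> 'a multiset \<Rightarrow> 'a list set \<Rightarrow> real" where
  "proj_prob N n \<nu> \<equiv> measure_pmf.prob (proj_unif N n \<nu>)"

lemma tuples_of_type_eq_permutations:
  "size \<nu> = N \<Longrightarrow> tuples_of_type N \<nu> = permutations_of_multiset \<nu>"
  by (auto simp: tuples_of_type_def permutations_of_multiset_def)

lemma proj_prob_card_ratio:
  "size \<nu> = N \<Longrightarrow> proj_prob N n \<nu> A =
     card (permutations_of_multiset \<nu> \<inter> take n -` A) / card (permutations_of_multiset \<nu>)"
  by (simp add: proj_unif_def tuples_of_type_eq_permutations measure_pmf_of_set)

lemma proj_prob_take_vimage:
  "n \<le> m \<Longrightarrow> proj_prob N m \<nu> (take n -` A) = proj_prob N n \<nu> A"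
  by (simp add: proj_unif_def vimage_def min_def)

lemma length_permutations_of_multiset:
  "xs \<in> permutations_of_multiset \<nu> \<Longrightarrow> length xs = size \<nu>"
  by (metis permutations_of_multisetD size_mset)

lemma permutations_of_multiset_butlast_vimage:
  assumes "size \<nu> = Suc m"
  shows "permutations_of_multiset \<nu> \<inter> take m -` A =
    (\<Union>b\<in>set_mset \<nu>. (\<lambda>xs. xs @ [b]) ` (permutations_of_multiset (\<nu> - {#b#}) \<inter> A))"
proof safe
  fix ys assume ys: "ys \<in> permutations_of_multiset \<nu>" "take m ys \<in> A"
  have length: "length ys = Suc m" using ys(1) assms by (simp add: length_permutations_of_multiset)
  then have split: "ys = butlast ys @ [last ys]" and take: "take m ys = butlast ys"
    by (metis append_butlast_last_id list.size(3) nat.distinct(1)) (simp add: length butlast_conv_take)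
  have "mset ys = \<nu>" using ys(1) by (rule permutations_of_multisetD)
  then have "last ys \<in># \<nu>" "mset (butlast ys) = \<nu> - {#last ys#}"
    by (metis split add_mset_remove_trivial mset_append mset_single_iff_right union_mset_add_mset_right
          union_single_eq_member add.right_neutral)+
  then show "ys \<in> (\<Union>b\<in>set_mset \<nu>. (\<lambda>xs. xs @ [b]) ` (permutations_of_multiset (\<nu> - {#b#}) \<inter> A))"
    using ys(2) split take by (auto simp: permutations_of_multiset_def)
next
  fix b xs assume "b \<in># \<nu>" "xs \<in> permutations_of_multiset (\<nu> - {#b#})"
  then show "xs @ [b] \<in> permutations_of_multiset \<nu>"
    by (simp add: permutations_of_multiset_def)
next
  fix b xs assume "b \<in># \<nu>" "xs \<in> permutations_of_multiset (\<nu> - {#b#})" "xs \<in> A"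
  then show "xs @ [b] \<in> take m -` A"
    using assms by (simp add: length_permutations_of_multiset size_Diff_singleton)
qed

lemma proj_prob_butlast:
  assumes "size \<nu> = Suc m"
  shows "proj_prob (Suc m) m \<nu> A =
     (\<Sum>b\<in>set_mset \<nu>. count \<nu> b / Suc m * proj_prob m m (\<nu> - {#b#}) A)"
proof -
  let ?P = permutations_of_multiset
  have card_butlast: "card (?P \<nu> \<inter> take m -` A) = (\<Sum>b\<in>set_mset \<nu>. card (?P (\<nu> - {#b#}) \<inter> A))"
    unfolding permutations_of_multiset_butlast_vimage[OF assms]
    by (subst card_UN_disjoint) (auto simp: card_image inj_on_def)
  have card_ratio: "card (?P (\<nu> - {#b#}) \<inter> A) / card (?P \<nu>) =
      count \<nu> b / Suc m * proj_prob m m (\<nu> - {#b#}) A" if b: "b \<in># \<nu>" for b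
  proof -
    have size_b: "size (\<nu> - {#b#}) = m" using b assms by (simp add: size_Diff_singleton)
    have "real (card (?P \<nu>)) * count \<nu> b = Suc m * real (card (?P (\<nu> - {#b#})))"
      using card_permutations_of_multiset_remove_aux[OF b] assms by (metis of_nat_mult)
    then have "count \<nu> b / Suc m = card (?P (\<nu> - {#b#})) / card (?P \<nu>)"
      by (simp add: field_simps card_gt_0_iff)
    moreover have "?P (\<nu> - {#b#}) \<inter> take m -` A = ?P (\<nu> - {#b#}) \<inter> A"
      using size_b by (auto simp: length_permutations_of_multiset)
    ultimately show ?thesis
      using size_b by (simp add: proj_prob_card_ratio card_gt_0_iff)
  qed
  have "proj_prob (Suc m) m \<nu> A = card (?P \<nu> \<inter> take m -` A) / card (?P \<nu>)"
    using assms by (rule proj_prob_card_ratio)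
  also have "\<dots> = (\<Sum>b\<in>set_mset \<nu>. card (?P (\<nu> - {#b#}) \<inter> A) / card (?P \<nu>))"
    unfolding card_butlast by (simp add: sum_divide_distrib)
  also have "\<dots> = (\<Sum>b\<in>set_mset \<nu>. count \<nu> b / Suc m * proj_prob m m (\<nu> - {#b#}) A)"
    by (rule sum.cong) (simp_all add: card_ratio)
  finally show ?thesis .
qed

lemma proj_prob_exchange:
  assumes "size \<mu> = m"
  shows "proj_prob m m \<mu> A =
    Suc m / (count \<mu> a + 1) * proj_prob (Suc m) m (add_mset a \<mu>) A
    - (\<Sum>b\<in>set_mset \<mu> - {a}. count \<mu> b / (count \<mu> a + 1) * proj_prob m m (add_mset a \<mu> - {#b#}) A)"
proof -
  define c where "c = real (count \<mu> a + 1)"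
  define rest where "rest = (\<Sum>b\<in>set_mset \<mu> - {a}. count \<mu> b * proj_prob m m (add_mset a \<mu> - {#b#}) A)"
  have "proj_prob (Suc m) m (add_mset a \<mu>) A =
      (\<Sum>b\<in>insert a (set_mset \<mu> - {a}).
        count (add_mset a \<mu>) b / Suc m * proj_prob m m (add_mset a \<mu> - {#b#}) A)"
    using proj_prob_butlast[of "add_mset a \<mu>" m A] assms by (simp add: insert_absorb)
  also have "\<dots> = (c * proj_prob m m \<mu> A + rest) / Suc m"
  proof (subst sum.insert)
    have "(\<Sum>b\<in>set_mset \<mu> - {a}. count (add_mset a \<mu>) b / Suc m * proj_prob m m (add_mset a \<mu> - {#b#}) A)
        = rest / Suc m"
      unfolding rest_def sum_divide_distrib by (rule sum.cong) auto
    then show "count (add_mset a \<mu>) a / Suc m * proj_prob m m (add_mset a \<mu> - {#a#}) A +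
        (\<Sum>b\<in>set_mset \<mu> - {a}. count (add_mset a \<mu>) b / Suc m * proj_prob m m (add_mset a \<mu> - {#b#}) A)
        = (c * proj_prob m m \<mu> A + rest) / Suc m"
      by (simp add: c_def field_simps)
  qed auto
  finally have "Suc m * proj_prob (Suc m) m (add_mset a \<mu>) A = c * proj_prob m m \<mu> A + rest"
    by (simp add: field_simps)
  moreover have "c > 0" by (simp add: c_def)
  ultimately have "proj_prob m m \<mu> A = Suc m / c * proj_prob (Suc m) m (add_mset a \<mu>) A - rest / c"
    by (simp add: field_simps)
  then show ?thesis
    by (simp add: c_def rest_def sum_divide_distrib)
qed

lemma sum_count_le_size: "B \<subseteq> set_mset \<mu> \<Longrightarrow> (\<Sum>b\<in>B. count \<mu> b) \<le> size \<mu>"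
  unfolding size_multiset_overloaded_eq by (rule sum_mono2) auto

lemma proj_prob_lift_Suc_count:
  assumes "a \<in> S" and "size \<mu> = m" and "set_mset \<mu> \<subseteq> S"
  shows "proj_prob m m \<mu> \<in> bounded_combinations (point_measures S (Suc m)) (proj_prob (Suc m) m)
           ((2 * real m + 2) ^ Suc (m - count \<mu> a))"
  using assms(2,3)
proof (induction "m - count \<mu> a" arbitrary: \<mu> rule: less_induct)
  case less
  let ?P = "point_measures S (Suc m)" and ?g = "proj_prob (Suc m) m"
  define k where "k = m - count \<mu> a"
  define c where "c = real (count \<mu> a + 1)"
  define B where "B = set_mset \<mu> - {a}"
  define X where "X = (2 * real m + 2) ^ k"
  have "c \<ge> 1" "X \<ge> 1" by (simp_all add: c_def X_def)
  have IH: "proj_prob m m (add_mset a \<mu> - {#b#}) \<in> bounded_combinations ?P ?g X" if "b \<in> B" for b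
  proof -
    obtain \<mu>' where \<mu>': "\<mu> = add_mset b \<mu>'" "b \<noteq> a"
      using \<open>b \<in> B\<close> by (auto simp: B_def dest: multi_member_split)
    have "count \<mu> a < m" using count_le_size[of \<mu>' a] \<mu>' less.prems by simp
    then have "m - count (add_mset a \<mu> - {#b#}) a < k" "Suc (m - count (add_mset a \<mu> - {#b#}) a) = k"
      using \<mu>' by (simp_all add: k_def)
    moreover have "size (add_mset a \<mu> - {#b#}) = m" "set_mset (add_mset a \<mu> - {#b#}) \<subseteq> S"
      using \<mu>' less.prems assms(1) by auto
    ultimately show ?thesis using less.hyps unfolding X_def k_def by metis
  qed
  have combination: "(\<lambda>A. Suc m / c * ?g (add_mset a \<mu>) A
          + (\<Sum>b\<in>B. - (count \<mu> b / c) * proj_prob m m (add_mset a \<mu> - {#b#}) A))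
        \<in> bounded_combinations ?P ?g (\<bar>Suc m / c\<bar> * 1 + (\<Sum>b\<in>B. \<bar>- (count \<mu> b / c)\<bar> * X))"
    using less.prems assms(1) IH
    by (intro bounded_combinations_add bounded_combinations_sum bounded_combinations_scale
        bounded_combinations_basis) (auto simp: B_def point_measures_def)
  have exchange: "(\<lambda>A. Suc m / c * ?g (add_mset a \<mu>) A
          + (\<Sum>b\<in>B. - (count \<mu> b / c) * proj_prob m m (add_mset a \<mu> - {#b#}) A)) = proj_prob m m \<mu>"
    using proj_prob_exchange[OF less.prems(1)] by (simp add: c_def B_def sum_negf)
  have bound: "\<bar>Suc m / c\<bar> * 1 + (\<Sum>b\<in>B. \<bar>- (count \<mu> b / c)\<bar> * X) \<le> (2 * real m + 2) ^ Suc k"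
  proof -
    have "\<bar>Suc m / c\<bar> \<le> Suc m" using \<open>c \<ge> 1\<close> by (simp add: divide_le_eq)
    moreover have "(\<Sum>b\<in>B. \<bar>- (count \<mu> b / c)\<bar> * X) \<le> (\<Sum>b\<in>B. count \<mu> b) * X"
    proof -
      have "\<bar>- (count \<mu> b / c)\<bar> * X \<le> count \<mu> b * X" for b
        using \<open>c \<ge> 1\<close> \<open>X \<ge> 1\<close> mult_left_mono[of 1 c "count \<mu> b * X"] by (simp add: divide_le_eq)
      then show ?thesis by (simp add: sum_mono sum_distrib_right)
    qed
    moreover have "real (\<Sum>b\<in>B. count \<mu> b) * X \<le> m * X"
    proof (rule mult_right_mono)
      show "real (\<Sum>b\<in>B. count \<mu> b) \<le> m"
        using sum_count_le_size[of B \<mu>] less.prems(1) unfolding B_def of_nat_le_iff by blast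
    qed (use \<open>X \<ge> 1\<close> in simp)
    moreover have "real (Suc m) \<le> Suc m * X"
      using \<open>X \<ge> 1\<close> mult_left_mono[of 1 X "Suc m"] by simp
    ultimately have "\<bar>Suc m / c\<bar> * 1 + (\<Sum>b\<in>B. \<bar>- (count \<mu> b / c)\<bar> * X) \<le> Suc m * X + m * X"
      by linarith
    also have "\<dots> \<le> (2 * real m + 2) * X"
      using \<open>X \<ge> 1\<close> by (simp add: algebra_simps)
    also have "\<dots> = (2 * real m + 2) ^ Suc k" by (simp add: X_def)
    finally show ?thesis .
  qed
  show ?case
    using combination exchange bounded_combinations_mono[OF bound] unfolding k_def by auto
qed

lemma proj_prob_lift_Suc:
  assumes "size \<mu> = m" and "m \<ge> 1" and "m \<le> N" and "set_mset \<mu> \<subseteq> S"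
  shows "proj_prob m m \<mu> \<in> bounded_combinations (point_measures S (Suc m)) (proj_prob (Suc m) m)
           ((2 * real N + 2) ^ Suc N)"
proof -
  have "\<mu> \<noteq> {#}" using assms(1,2) by auto
  then obtain a where "a \<in># \<mu>" by blast
  then have "proj_prob m m \<mu> \<in> bounded_combinations (point_measures S (Suc m)) (proj_prob (Suc m) m)
               ((2 * real m + 2) ^ Suc (m - count \<mu> a))"
    using assms by (intro proj_prob_lift_Suc_count) auto
  moreover have "(2 * real m + 2) ^ Suc (m - count \<mu> a) \<le> (2 * real N + 2) ^ Suc N"
  proof -
    have "(2 * real m + 2) ^ Suc (m - count \<mu> a) \<le> (2 * real N + 2) ^ Suc (m - count \<mu> a)"
      using assms(3) by (intro power_mono) auto
    also have "\<dots> \<le> (2 * real N + 2) ^ Suc N"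
      using assms(3) by (intro power_increasing) auto
    finally show ?thesis .
  qed
  ultimately show ?thesis using bounded_combinations_mono by fastforce
qed

lemma proj_prob_lift:
  assumes "1 \<le> n" and "n \<le> M" and "M \<le> N" and "\<mu> \<in> point_measures S n"
  shows "proj_prob n n \<mu> \<in> bounded_combinations (point_measures S M) (proj_prob M n)
           (((2 * real N + 2) ^ Suc N) ^ (M - n))"
  using assms(2,3)
proof (induction M rule: dec_induct)
  case base
  show ?case using bounded_combinations_basis[OF assms(4)] by simp
next
  case (step M)
  define C where "C = (2 * real N + 2) ^ Suc N"
  have "proj_prob M n \<nu> \<in> bounded_combinations (point_measures S (Suc M)) (proj_prob (Suc M) n) C"
    if "\<nu> \<in> point_measures S M" for \<nu>
  proof -
    have "proj_prob M M \<nu> \<in> bounded_combinations (point_measures S (Suc M)) (proj_prob (Suc M) M) C"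
      unfolding C_def
      using that assms(1) step by (intro proj_prob_lift_Suc) (auto simp: point_measures_def)
    then have "(\<lambda>A. proj_prob M M \<nu> (take n -` A))
        \<in> bounded_combinations (point_measures S (Suc M)) (\<lambda>\<nu>' A. proj_prob (Suc M) M \<nu>' (take n -` A)) C"
      by (rule bounded_combinations_vimage)
    then show ?thesis using step.hyps by (simp add: proj_prob_take_vimage)
  qed
  then have "proj_prob n n \<mu> \<in> bounded_combinations (point_measures S (Suc M)) (proj_prob (Suc M) n)
      (((2 * real N + 2) ^ Suc N) ^ (M - n) * C)"
    using step by (intro bounded_combinations_compose[OF step.IH]) (auto simp: C_def)
  then show ?case using step.hyps by (simp add: C_def Suc_diff_le mult.commute)
qed

lemma proj_prob_coefficients:
  assumes "1 \<le> n" and "n \<le> N" and "((2 * real N + 2) ^ Suc N) ^ (N - n) < K"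
  shows "\<exists>c. (\<forall>\<mu>\<in>point_measures S n. finite {\<nu>\<in>point_measures S N. c \<mu> \<nu> \<noteq> 0} \<and>
      (\<forall>A. proj_prob n n \<mu> A = (\<Sum>\<nu>\<in>{\<nu>\<in>point_measures S N. c \<mu> \<nu> \<noteq> 0}. c \<mu> \<nu> * proj_prob N n \<nu> A))) \<and>
    (\<forall>\<mu>\<in>point_measures S n. (\<Sum>\<nu>\<in>{\<nu>\<in>point_measures S N. c \<mu> \<nu> \<noteq> 0}. \<bar>c \<mu> \<nu>\<bar>) < K)"
proof -
  have "\<forall>\<mu>\<in>point_measures S n. \<exists>c. finite {\<nu>\<in>point_measures S N. c \<nu> \<noteq> 0} \<and>
      (\<forall>A. proj_prob n n \<mu> A = (\<Sum>\<nu>\<in>{\<nu>\<in>point_measures S N. c \<nu> \<noteq> 0}. c \<nu> * proj_prob N n \<nu> A)) \<and>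
      (\<Sum>\<nu>\<in>{\<nu>\<in>point_measures S N. c \<nu> \<noteq> 0}. \<bar>c \<nu>\<bar>) \<le> ((2 * real N + 2) ^ Suc N) ^ (N - n)"
    using proj_prob_lift[OF assms(1,2) order_refl] by (intro ballI bounded_combinations_coefficients)
  then obtain c where "\<forall>\<mu>\<in>point_measures S n. finite {\<nu>\<in>point_measures S N. c \<mu> \<nu> \<noteq> 0} \<and>
      (\<forall>A. proj_prob n n \<mu> A = (\<Sum>\<nu>\<in>{\<nu>\<in>point_measures S N. c \<mu> \<nu> \<noteq> 0}. c \<mu> \<nu> * proj_prob N n \<nu> A)) \<and>
      (\<Sum>\<nu>\<in>{\<nu>\<in>point_measures S N. c \<mu> \<nu> \<noteq> 0}. \<bar>c \<mu> \<nu>\<bar>) \<le> ((2 * real N + 2) ^ Suc N) ^ (N - n)"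
    by (rule bchoice[elim_format]) blast
  then show ?thesis using assms(3) by (intro exI[of _ c]) fastforce
qed

theorem lemma1:
  fixes n N :: nat
  assumes "1 \<le> n" and "n \<le> N"
  shows "\<exists>K>0. \<forall>S :: 'a set. \<exists>c :: 'a multiset \<Rightarrow> 'a multiset \<Rightarrow> real.
     (\<forall>\<mu>\<in>point_measures S n.
        finite {\<nu>\<in>point_measures S N. c \<mu> \<nu> \<noteq> 0} \<and>
        (\<forall>A. measure_pmf.prob (proj_unif n n \<mu>) A =
              (\<Sum>\<nu>\<in>{\<nu>\<in>point_measures S N. c \<mu> \<nu> \<noteq> 0}.
                  c \<mu> \<nu> * measure_pmf.prob (proj_unif N n \<nu>) A))) \<and>
     (\<forall>\<mu>\<in>point_measures S n.
        (\<Sum>\<nu>\<in>{\<nu>\<in>point_measures S N. c \<mu> \<nu> \<noteq> 0}. \<bar>c \<mu> \<nu>\<bar>) < K)"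
proof -
  define K where "K = ((2 * real N + 2) ^ Suc N) ^ (N - n) + 1"
  have "K > 0" and "((2 * real N + 2) ^ Suc N) ^ (N - n) < K"
    by (simp_all add: K_def add_pos_nonneg)
  then show ?thesis using proj_prob_coefficients[OF assms] by blast
qed

end
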